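(* Fix any sufficiently small $\varepsilon > 0$ and integers $m = m(n)\ge \varepsilon n$, $\ell = \ell(n)\in [\varepsilon m, m]$ and $k = k(n)$ with $k+m\le n$. Let $G = (U,V,F)$ be a bipartite graph with parts $U,V\subseteq V_n$ and edge set $F$, where $|U| = k$, $|V| = m$, and every $u\in U$ has $\deg_G(u)\ge \ell$. Let $T$ be a uniformly random spanning tree of $K_n$. Then there is a constant $c = c(\varepsilon) > 0$ such that $$\Pr(F\cap E(T) = \emptyset)\le \exp(-ck).$$
   Context: $K_n$ is the complete graph on vertex set $V_n=\{v_1,\dots,v_n\}$. *)

theory Defs
  imports "HOL-Probability.Probability"
begin

text \<open>Vertex set V_n = {v_1,...,v_n} is represented by {1..n}; edges are 2-element sets.\<close>

definition Kn_edges :: "nat \<Rightarrow> nat set set" where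
  "Kn_edges n = {{u, v} | u v. u \<in> {1..n} \<and> v \<in> {1..n} \<and> u \<noteq> v}"

definition adj :: "nat set set \<Rightarrow> nat \<Rightarrow> nat \<Rightarrow> bool" where
  "adj T u v \<longleftrightarrow> {u, v} \<in> T"

definition connected_on :: "nat set \<Rightarrow> nat set set \<Rightarrow> bool" where
  "connected_on W T \<longleftrightarrow> (\<forall>u\<in>W. \<forall>v\<in>W. (adj T)\<^sup>*\<^sup>* u v)"

definition acyclic_graph :: "nat set set \<Rightarrow> bool" where
  "acyclic_graph T \<longleftrightarrow> \<not> (\<exists>cs. length cs \<ge> 3 \<and> distinct cs \<and>
      (\<forall>i < length cs. {cs ! i, cs ! ((i + 1) mod length cs)} \<in> T))"

definition spanning_tree :: "nat \<Rightarrow> nat set set \<Rightarrow> bool" where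
  "spanning_tree n T \<longleftrightarrow> T \<subseteq> Kn_edges n \<and> connected_on {1..n} T \<and> acyclic_graph T"

definition spanning_trees :: "nat \<Rightarrow> nat set set set" where
  "spanning_trees n = {T. spanning_tree n T}"

definition UST :: "nat \<Rightarrow> nat set set pmf" where
  "UST n = pmf_of_set (spanning_trees n)"

definition bip_deg :: "nat set set \<Rightarrow> nat set \<Rightarrow> nat \<Rightarrow> nat" where
  "bip_deg F V u = card {v \<in> V. {u, v} \<in> F}"

end

theory Submission
  imports Defs "HOL-Library.Transitive_Closure_Table"
begin

text \<open>
  Let A(S) be the set of spanning trees of K_n containing no edge of F at a vertex of S.
  For u \<notin> S and an F-neighbour v of u, a tree T \<in> A(S \<union> {u}) is switched into a tree
  of A(S) - A(S \<union> {u}) by adding the edge uv and deleting the edge ux through which the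
  tree path from v enters u. Since uv is the only F-edge at u of the new tree, the pair (T, v)
  is recovered from the new tree and x, so |A(S \<union> {u})| (n + l) \<le> n |A(S)|. Iterating
  over the k vertices of U bounds the probability by (n / (n + l))^k, and
  l \<ge> \<epsilon> m \<ge> \<epsilon>^2 n turns this into (1 + \<epsilon>^2)^(-k).
\<close>

section \<open>Walks and cycles\<close>

lemma symp_adj: "symp (adj T)"
  by (simp add: symp_def adj_def insert_commute)

lemma adj_rtranclp_sym: "(adj T)\<^sup>*\<^sup>* a b \<Longrightarrow> (adj T)\<^sup>*\<^sup>* b a"
  using symp_rtranclp[OF symp_adj] by (rule sympD)

lemma adj_rtranclp_mono: "(adj H)\<^sup>*\<^sup>* a b \<Longrightarrow> H \<subseteq> T \<Longrightarrow> (adj T)\<^sup>*\<^sup>* a b"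
  by (metis adj_def predicate2D predicate2I rtranclp_mono subsetD)

lemma rtrancl_path_iff_successively:
  "rtrancl_path r x xs y \<longleftrightarrow> successively r (x # xs) \<and> last (x # xs) = y"
proof (induction xs arbitrary: x)
  case Nil
  then show ?case by (auto elim: rtrancl_path.cases intro: rtrancl_path.base)
next
  case (Cons z zs)
  then show ?case by (auto elim: rtrancl_path.cases intro: rtrancl_path.step)
qed

lemma cycle_edges_iff_closed_walk:
  assumes "length cs \<ge> 2"
  shows "(\<forall>i < length cs. {cs ! i, cs ! ((i + 1) mod length cs)} \<in> T) \<longleftrightarrow>
    successively (adj T) cs \<and> adj T (last cs) (hd cs)"
proof -
  let ?L = "length cs"
  have split: "(\<forall>i < ?L. P i) \<longleftrightarrow> (\<forall>i. Suc i < ?L \<longrightarrow> P i) \<and> P (?L - 1)" for P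
  proof
    assume "(\<forall>i. Suc i < ?L \<longrightarrow> P i) \<and> P (?L - 1)"
    moreover have "Suc i < ?L \<or> i = ?L - 1" if "i < ?L" for i
      using that by linarith
    ultimately show "\<forall>i < ?L. P i"
      by blast
  qed (use assms in auto)
  have "cs \<noteq> []"
    using assms by auto
  then have "{cs ! (?L - 1), cs ! ((?L - 1 + 1) mod ?L)} = {last cs, hd cs}"
    by (simp add: last_conv_nth hd_conv_nth)
  moreover have "(\<forall>i. Suc i < ?L \<longrightarrow> {cs ! i, cs ! ((i + 1) mod ?L)} \<in> T) \<longleftrightarrow>
      (\<forall>i. Suc i < ?L \<longrightarrow> {cs ! i, cs ! Suc i} \<in> T)"
    by auto
  ultimately show ?thesis
    unfolding split successively_conv_nth adj_def by simp
qed

lemma acyclic_graph_iff_no_closed_path: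
  "acyclic_graph T \<longleftrightarrow>
    \<not> (\<exists>cs. length cs \<ge> 3 \<and> distinct cs \<and> successively (adj T) cs \<and> adj T (last cs) (hd cs))"
proof -
  have "length cs \<ge> 3 \<and> distinct cs \<and> (\<forall>i < length cs. {cs ! i, cs ! ((i + 1) mod length cs)} \<in> T) \<longleftrightarrow>
      length cs \<ge> 3 \<and> distinct cs \<and> successively (adj T) cs \<and> adj T (last cs) (hd cs)" for cs
  proof (cases "length cs \<ge> 3")
    case True
    then show ?thesis
      using cycle_edges_iff_closed_walk[of cs T] by simp
  qed simp
  then show ?thesis
    unfolding acyclic_graph_def by (simp only:)
qed

lemma acyclic_graph_bridge:
  assumes acyclic: "acyclic_graph T" and ab: "{a, b} \<in> T" "a \<noteq> b"
  shows "\<not> (adj (T - {{a, b}}))\<^sup>*\<^sup>* a b"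
proof
  assume "(adj (T - {{a, b}}))\<^sup>*\<^sup>* a b"
  then obtain ys where "rtrancl_path (adj (T - {{a, b}})) a ys b"
    unfolding rtranclp_eq_rtrancl_path by blast
  then obtain xs where "rtrancl_path (adj (T - {{a, b}})) a xs b" and distinct: "distinct (a # xs)"
    by (rule rtrancl_path_distinct)
  then have walk: "successively (adj (T - {{a, b}})) (a # xs)" and last: "last (a # xs) = b"
    by (simp_all add: rtrancl_path_iff_successively)
  have "length (a # xs) \<ge> 3"
  proof (rule ccontr)
    assume "\<not> length (a # xs) \<ge> 3"
    then consider "xs = []" | y where "xs = [y]"
      by (cases xs rule: remdups_adj.cases) auto
    then show False
      using walk last ab by cases (auto simp: adj_def)
  qed
  moreover have "successively (adj T) (a # xs)"
    using walk by (rule successively_mono) (auto simp: adj_def)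
  moreover have "adj T (last (a # xs)) (hd (a # xs))"
    using ab last by (simp add: adj_def insert_commute)
  ultimately show False
    using acyclic distinct unfolding acyclic_graph_iff_no_closed_path by blast
qed

lemma successively_adj_Diff_closing_edge:
  assumes len: "length cs \<ge> 3" and distinct: "distinct cs" and walk: "successively (adj T) cs"
  shows "successively (adj (T - {{last cs, hd cs}})) cs"
  unfolding successively_conv_nth
proof (intro allI impI)
  fix i
  assume i: "Suc i < length cs"
  have "cs \<noteq> []"
    using len by auto
  then have ends: "last cs = cs ! (length cs - 1)" "hd cs = cs ! 0"
    by (simp_all add: last_conv_nth hd_conv_nth)
  have index_eq: "cs ! i = cs ! j \<longleftrightarrow> i = j" if "i < length cs" "j < length cs" for i j
    using distinct that by (rule nth_eq_iff_index_eq)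
  have "cs ! i \<noteq> last cs"
    using i unfolding ends by (subst index_eq) auto
  moreover have "cs ! i \<noteq> hd cs \<or> cs ! Suc i \<noteq> last cs"
  proof (cases "i = 0")
    case True
    then show ?thesis
      using i len unfolding ends by (subst (2) index_eq) auto
  next
    case False
    then show ?thesis
      using i unfolding ends by (subst (1) index_eq) auto
  qed
  ultimately have "{cs ! i, cs ! Suc i} \<noteq> {last cs, hd cs}"
    by (auto simp: doubleton_eq_iff)
  then show "adj (T - {{last cs, hd cs}}) (cs ! i) (cs ! Suc i)"
    using successively_nth[OF walk i] by (simp add: adj_def)
qed

lemma acyclic_graph_if_bridges:
  assumes bridges: "\<And>a b. {a, b} \<in> T \<Longrightarrow> a \<noteq> b \<Longrightarrow> \<not> (adj (T - {{a, b}}))\<^sup>*\<^sup>* a b"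
  shows "acyclic_graph T"
  unfolding acyclic_graph_iff_no_closed_path
proof (rule notI, elim exE conjE)
  fix cs
  assume len: "length cs \<ge> 3" and distinct: "distinct cs"
    and walk: "successively (adj T) cs" and closing: "adj T (last cs) (hd cs)"
  let ?a = "last cs" and ?b = "hd cs"
  have "?a \<noteq> ?b"
    using len distinct by (cases cs) auto
  have "cs = ?b # tl cs"
    using len by (cases cs) auto
  with successively_adj_Diff_closing_edge[OF len distinct walk]
  have "rtrancl_path (adj (T - {{?a, ?b}})) ?b (tl cs) ?a"
    unfolding rtrancl_path_iff_successively by simp
  then have "(adj (T - {{?a, ?b}}))\<^sup>*\<^sup>* ?b ?a"
    unfolding rtranclp_eq_rtrancl_path by blast
  then have "(adj (T - {{?a, ?b}}))\<^sup>*\<^sup>* ?a ?b"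
    by (rule adj_rtranclp_sym)
  moreover have "{?a, ?b} \<in> T"
    using closing by (simp add: adj_def)
  ultimately show False
    using bridges \<open>?a \<noteq> ?b\<close> by blast
qed

lemma acyclic_graph_iff_bridges:
  "acyclic_graph T \<longleftrightarrow> (\<forall>a b. {a, b} \<in> T \<longrightarrow> a \<noteq> b \<longrightarrow> \<not> (adj (T - {{a, b}}))\<^sup>*\<^sup>* a b)"
  using acyclic_graph_bridge acyclic_graph_if_bridges by blast

lemma acyclic_graph_subset: "acyclic_graph T \<Longrightarrow> H \<subseteq> T \<Longrightarrow> acyclic_graph H"
  unfolding acyclic_graph_def by blast

lemma adj_insert_rtranclpD:
  assumes "(adj (insert {c, d} H))\<^sup>*\<^sup>* a b"
  shows "(adj H)\<^sup>*\<^sup>* a b \<or> (adj H)\<^sup>*\<^sup>* a c \<and> (adj H)\<^sup>*\<^sup>* d b \<or> (adj H)\<^sup>*\<^sup>* a d \<and> (adj H)\<^sup>*\<^sup>* c b"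
  using assms
proof (induction rule: rtranclp_induct)
  case (step y z)
  then have "adj H y z \<or> y = c \<and> z = d \<or> y = d \<and> z = c"
    by (auto simp: adj_def doubleton_eq_iff)
  then show ?case
    using step.IH by (meson rtranclp.rtrancl_into_rtrancl rtranclp.rtrancl_refl)
qed simp

lemma acyclic_graph_insert:
  assumes acyclic: "acyclic_graph H" and disconnected: "\<not> (adj H)\<^sup>*\<^sup>* c d"
  shows "acyclic_graph (insert {c, d} H)"
  unfolding acyclic_graph_iff_bridges
proof (intro allI impI notI)
  fix a b
  assume ab: "{a, b} \<in> insert {c, d} H" "a \<noteq> b" and reach: "(adj (insert {c, d} H - {{a, b}}))\<^sup>*\<^sup>* a b"
  show False
  proof (cases "{a, b} = {c, d}")
    case True
    from reach have "(adj H)\<^sup>*\<^sup>* a b"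
      by (rule adj_rtranclp_mono) (use True in auto)
    then show False
      using True disconnected adj_rtranclp_sym by (auto simp: doubleton_eq_iff)
  next
    case False
    let ?H = "H - {{a, b}}"
    have "{a, b} \<in> H"
      using ab False by simp
    then have "\<not> (adj ?H)\<^sup>*\<^sup>* a b"
      using acyclic ab(2) by (intro acyclic_graph_bridge)
    moreover have "insert {c, d} H - {{a, b}} = insert {c, d} ?H"
      using False by auto
    ultimately have "(adj ?H)\<^sup>*\<^sup>* a c \<and> (adj ?H)\<^sup>*\<^sup>* d b \<or> (adj ?H)\<^sup>*\<^sup>* a d \<and> (adj ?H)\<^sup>*\<^sup>* c b"
      using reach adj_insert_rtranclpD by metis
    then have "(adj H)\<^sup>*\<^sup>* a c \<and> (adj H)\<^sup>*\<^sup>* d b \<or> (adj H)\<^sup>*\<^sup>* a d \<and> (adj H)\<^sup>*\<^sup>* c b"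
      using adj_rtranclp_mono[of ?H _ _ H] by blast
    moreover have "(adj H)\<^sup>*\<^sup>* a b"
      using \<open>{a, b} \<in> H\<close> by (intro r_into_rtranclp) (simp add: adj_def)
    ultimately have "(adj H)\<^sup>*\<^sup>* c d"
      using adj_rtranclp_sym by (meson rtranclp_trans)
    then show False
      using disconnected by contradiction
  qed
qed

lemma adj_rtranclp_isolated:
  assumes "(adj H)\<^sup>*\<^sup>* a b" and "\<forall>e\<in>H. b \<notin> e"
  shows "a = b"
  using assms(1) by (cases rule: rtranclp.cases) (use assms(2) in \<open>auto simp: adj_def\<close>)

section \<open>Spanning trees of the complete graph\<close>

lemma Kn_edgesD: "{a, b} \<in> Kn_edges n \<Longrightarrow> a \<in> {1..n} \<and> b \<in> {1..n} \<and> a \<noteq> b"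
  unfolding Kn_edges_def by (auto simp: doubleton_eq_iff)

definition star :: "nat \<Rightarrow> nat set set" where
  "star n = {{1, j} | j. j \<in> {2..n}}"

lemma spanning_tree_star: "spanning_tree n (star n)"
  unfolding spanning_tree_def
proof (intro conjI)
  show "star n \<subseteq> Kn_edges n"
    unfolding star_def Kn_edges_def by force
  have "adj (star n) a 1" if "a \<in> {2..n}" for a
    using that insert_commute[of a 1] unfolding adj_def star_def by auto
  then have "(adj (star n))\<^sup>*\<^sup>* a 1" if "a \<in> {1..n}" for a
    using that by (cases "a = 1") auto
  then show "connected_on {1..n} (star n)"
    unfolding connected_on_def by (meson adj_rtranclp_sym rtranclp_trans)
  show "acyclic_graph (star n)"
    unfolding acyclic_graph_iff_bridges
  proof (intro allI impI notI)
    fix a b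
    assume ab: "{a, b} \<in> star n" "a \<noteq> b" and reach: "(adj (star n - {{a, b}}))\<^sup>*\<^sup>* a b"
    then obtain j where j: "{a, b} = {1, j}" "j \<noteq> 1"
      unfolding star_def by auto
    then have "\<forall>e \<in> star n - {{a, b}}. j \<notin> e"
      unfolding star_def by (auto simp: doubleton_eq_iff)
    then show False
      using j ab(2) reach adj_rtranclp_sym adj_rtranclp_isolated
      by (metis doubleton_eq_iff)
  qed
qed

lemma spanning_trees_nonempty: "spanning_trees n \<noteq> {}"
  using spanning_tree_star unfolding spanning_trees_def by blast

lemma finite_spanning_trees: "finite (spanning_trees n)"
proof -
  have "spanning_trees n \<subseteq> Pow (Pow {1..n})"
    unfolding spanning_trees_def spanning_tree_def Kn_edges_def by auto
  then show ?thesis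
    by (rule finite_subset) simp
qed

lemma rtranclp_adj_last_edge:
  "(adj T)\<^sup>*\<^sup>* v u \<Longrightarrow> v \<noteq> u \<Longrightarrow> \<exists>x. {u, x} \<in> T \<and> (adj {e \<in> T. u \<notin> e})\<^sup>*\<^sup>* v x"
proof (induction rule: converse_rtranclp_induct)
  case (step y z)
  show ?case
  proof (cases "z = u")
    case True
    with step.hyps(1) show ?thesis
      by (auto simp: adj_def insert_commute)
  next
    case False
    then obtain x where "{u, x} \<in> T" "(adj {e \<in> T. u \<notin> e})\<^sup>*\<^sup>* z x"
      using step.IH by blast
    moreover have "adj {e \<in> T. u \<notin> e} y z"
      using step.hyps(1) step.prems False by (simp add: adj_def)
    ultimately show ?thesis
      by (meson converse_rtranclp_into_rtranclp)
  qed
qed simp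

lemma connected_on_if_edges_reachable:
  assumes "connected_on W T" and "\<And>a b. adj T a b \<Longrightarrow> (adj T')\<^sup>*\<^sup>* a b"
  shows "connected_on W T'"
proof -
  have "(adj T)\<^sup>*\<^sup>* \<le> (adj T')\<^sup>*\<^sup>*"
    using assms(2) by (metis predicate2I rtranclp_idemp rtranclp_mono)
  then show ?thesis
    using assms(1) unfolding connected_on_def by blast
qed

lemma connected_on_edge_exchange:
  assumes con: "connected_on W T" and vx: "(adj (T - {{u, x}}))\<^sup>*\<^sup>* v x"
  shows "connected_on W (insert {u, v} (T - {{u, x}}))" (is "connected_on W ?T'")
proof (rule connected_on_if_edges_reachable[OF con])
  have "adj ?T' u v"
    unfolding adj_def by simp
  moreover have "(adj ?T')\<^sup>*\<^sup>* v x"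
    using vx by (rule adj_rtranclp_mono) auto
  ultimately have ux: "(adj ?T')\<^sup>*\<^sup>* u x"
    by (rule converse_rtranclp_into_rtranclp)
  fix a b
  assume "adj T a b"
  show "(adj ?T')\<^sup>*\<^sup>* a b"
  proof (cases "{a, b} = {u, x}")
    case True
    then show ?thesis
      using ux adj_rtranclp_sym by (auto simp: doubleton_eq_iff)
  next
    case False
    then have "adj ?T' a b"
      using \<open>adj T a b\<close> by (auto simp: adj_def)
    then show ?thesis
      by simp
  qed
qed

lemma spanning_tree_exchange:
  assumes T: "spanning_tree n T" and uv: "u \<in> {1..n}" "v \<in> {1..n}" "u \<noteq> v" "{u, v} \<notin> T"
  shows "\<exists>x. {u, x} \<in> T \<and> spanning_tree n (insert {u, v} (T - {{u, x}}))"
proof -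
  have sub: "T \<subseteq> Kn_edges n" and con: "connected_on {1..n} T" and acyclic: "acyclic_graph T"
    using T unfolding spanning_tree_def by auto
  have "(adj T)\<^sup>*\<^sup>* v u"
    using con uv unfolding connected_on_def by blast
  then obtain x where x: "{u, x} \<in> T" and "(adj {e \<in> T. u \<notin> e})\<^sup>*\<^sup>* v x"
    using rtranclp_adj_last_edge uv(3) by metis
  from this(2) have vx: "(adj (T - {{u, x}}))\<^sup>*\<^sup>* v x"
    by (rule adj_rtranclp_mono) auto
  have "u \<noteq> x"
    using x sub Kn_edgesD by blast
  have "\<not> (adj (T - {{u, x}}))\<^sup>*\<^sup>* u v"
  proof
    assume "(adj (T - {{u, x}}))\<^sup>*\<^sup>* u v"
    then have "(adj (T - {{u, x}}))\<^sup>*\<^sup>* u x"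
      using vx by (rule rtranclp_trans)
    with acyclic_graph_bridge[OF acyclic x \<open>u \<noteq> x\<close>] show False
      by contradiction
  qed
  then have "acyclic_graph (insert {u, v} (T - {{u, x}}))"
    using acyclic_graph_insert acyclic_graph_subset[OF acyclic] by blast
  moreover have "insert {u, v} (T - {{u, x}}) \<subseteq> Kn_edges n"
    using sub uv unfolding Kn_edges_def by blast
  moreover have "connected_on {1..n} (insert {u, v} (T - {{u, x}}))"
    using con vx by (rule connected_on_edge_exchange)
  ultimately show ?thesis
    using x unfolding spanning_tree_def by blast
qed

section \<open>Counting trees that avoid F\<close>

definition trees_avoiding :: "nat \<Rightarrow> nat set set \<Rightarrow> nat set \<Rightarrow> nat set set set" where
  "trees_avoiding n F S = {T \<in> spanning_trees n. \<forall>s\<in>S. \<forall>w. {s, w} \<in> F \<longrightarrow> {s, w} \<notin> T}"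

lemma trees_avoiding_empty [simp]: "trees_avoiding n F {} = spanning_trees n"
  by (simp add: trees_avoiding_def)

lemma exchange_into_trees_avoiding:
  assumes T: "T \<in> trees_avoiding n F (insert u S)" and u: "u \<in> {1..n}" "u \<notin> S"
    and v: "v \<in> {1..n}" "v \<notin> S" "v \<noteq> u" "{u, v} \<in> F"
  shows "\<exists>x \<in> {1..n}. {u, x} \<in> T \<and>
    insert {u, v} (T - {{u, x}}) \<in> trees_avoiding n F S - trees_avoiding n F (insert u S)"
proof -
  have tree: "spanning_tree n T" and "{u, v} \<notin> T"
    using T v(4) unfolding trees_avoiding_def spanning_trees_def by auto
  then obtain x where x: "{u, x} \<in> T" and T': "spanning_tree n (insert {u, v} (T - {{u, x}}))"
    using spanning_tree_exchange u(1) v(1,3) by metis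
  have "x \<in> {1..n}"
    using x tree Kn_edgesD unfolding spanning_tree_def by blast
  moreover have "{s, w} \<noteq> {u, v}" if "s \<in> S" for s w
    using that u(2) v(2) by (auto simp: doubleton_eq_iff)
  ultimately show ?thesis
    using T T' x v(4) unfolding trees_avoiding_def spanning_trees_def by auto
qed

lemma edge_switch_inj:
  assumes "{u, x} \<in> T\<^sub>1" "{u, x} \<in> T\<^sub>2" "{u, v\<^sub>2} \<notin> T\<^sub>1" "{u, v\<^sub>2} \<notin> T\<^sub>2"
    and switch: "insert {u, v\<^sub>1} (T\<^sub>1 - {{u, x}}) = insert {u, v\<^sub>2} (T\<^sub>2 - {{u, x}})"
  shows "T\<^sub>1 = T\<^sub>2 \<and> v\<^sub>1 = v\<^sub>2"
proof -
  have "{u, v\<^sub>2} \<in> insert {u, v\<^sub>1} (T\<^sub>1 - {{u, x}})"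
    unfolding switch by simp
  then have "v\<^sub>1 = v\<^sub>2"
    using assms(3) by (auto simp: doubleton_eq_iff)
  then have "T\<^sub>1 - {{u, x}} = T\<^sub>2 - {{u, x}}"
    using switch assms(3,4) by (simp add: insert_ident)
  then have "T\<^sub>1 = T\<^sub>2"
    using assms(1,2) by (metis insert_Diff)
  then show ?thesis
    using \<open>v\<^sub>1 = v\<^sub>2\<close> ..
qed

lemma card_le_by_switching:
  assumes "finite A" "finite X" "A' \<subseteq> A"
    and "inj_on f (A' \<times> N)" "f ` (A' \<times> N) \<subseteq> (A - A') \<times> X"
  shows "card A' * (card X + card N) \<le> card X * card A"
proof -
  have "card (A' \<times> N) \<le> card ((A - A') \<times> X)"
    using assms by (intro card_inj_on_le) auto
  moreover have "card (A - A') = card A - card A'" "card A' \<le> card A"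
    using assms(1,3) by (auto intro: card_Diff_subset finite_subset card_mono)
  ultimately have "card A' * card N \<le> card A * card X - card A' * card X"
    by (simp add: card_cartesian_product diff_mult_distrib)
  moreover have "card A' * card X \<le> card A * card X"
    using \<open>card A' \<le> card A\<close> by (rule mult_le_mono1)
  ultimately have "card A' * card N + card A' * card X \<le> card A * card X"
    by linarith
  then show ?thesis
    by (simp add: algebra_simps)
qed

lemma card_trees_avoiding_insert:
  assumes u: "u \<in> {1..n}" "u \<notin> S" "u \<notin> V" and V: "V \<subseteq> {1..n}" "S \<inter> V = {}"
  shows "card (trees_avoiding n F (insert u S)) * (n + bip_deg F V u) \<le> n * card (trees_avoiding n F S)"
proof -
  define A where "A = trees_avoiding n F S"
  define A' where "A' = trees_avoiding n F (insert u S)"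
  define N where "N = {v \<in> V. {u, v} \<in> F}"
  have "A' \<subseteq> A" and "finite A"
    unfolding A_def A'_def trees_avoiding_def using finite_spanning_trees by auto
  have avoid: "{u, v} \<notin> T" if "T \<in> A'" "v \<in> N" for T v
    using that unfolding A'_def N_def trees_avoiding_def by auto
  have "\<forall>T\<in>A'. \<forall>v\<in>N. \<exists>x \<in> {1..n}. {u, x} \<in> T \<and> insert {u, v} (T - {{u, x}}) \<in> A - A'"
    using exchange_into_trees_avoiding u V unfolding A_def A'_def N_def by blast
  then obtain x where x: "\<And>T v. T \<in> A' \<Longrightarrow> v \<in> N \<Longrightarrow>
      x T v \<in> {1..n} \<and> {u, x T v} \<in> T \<and> insert {u, v} (T - {{u, x T v}}) \<in> A - A'"
    by metis
  define switch where "switch = (\<lambda>(T, v). (insert {u, v} (T - {{u, x T v}}), x T v))"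
  have "switch (T, v) \<in> (A - A') \<times> {1..n}" if "T \<in> A'" "v \<in> N" for T v
    using x[OF that] by (simp add: switch_def)
  then have "switch ` (A' \<times> N) \<subseteq> (A - A') \<times> {1..n}"
    by (auto simp: image_subset_iff)
  moreover have "inj_on switch (A' \<times> N)"
  proof (rule inj_onI, clarify)
    fix T\<^sub>1 v\<^sub>1 T\<^sub>2 v\<^sub>2
    assume 1: "T\<^sub>1 \<in> A'" "v\<^sub>1 \<in> N" and 2: "T\<^sub>2 \<in> A'" "v\<^sub>2 \<in> N"
      and eq: "switch (T\<^sub>1, v\<^sub>1) = switch (T\<^sub>2, v\<^sub>2)"
    from arg_cong[OF eq, of snd] have same_x: "x T\<^sub>1 v\<^sub>1 = x T\<^sub>2 v\<^sub>2"
      by (simp add: switch_def)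
    from arg_cong[OF eq, of fst] have "insert {u, v\<^sub>1} (T\<^sub>1 - {{u, x T\<^sub>1 v\<^sub>1}}) = insert {u, v\<^sub>2} (T\<^sub>2 - {{u, x T\<^sub>2 v\<^sub>2}})"
      by (simp add: switch_def)
    then show "T\<^sub>1 = T\<^sub>2 \<and> v\<^sub>1 = v\<^sub>2"
      using x[OF 1] x[OF 2] avoid[OF 1(1) 2(2)] avoid[OF 2]
      by (intro edge_switch_inj[of u "x T\<^sub>2 v\<^sub>2"]) (simp_all add: same_x)
  qed
  ultimately have "card A' * (card {1..n} + card N) \<le> card {1..n} * card A"
    using \<open>A' \<subseteq> A\<close> \<open>finite A\<close> by (intro card_le_by_switching) auto
  moreover have "card N = bip_deg F V u"
    unfolding N_def bip_deg_def ..
  ultimately show ?thesis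
    unfolding A_def A'_def by (simp add: algebra_simps)
qed

lemma card_trees_avoiding_le:
  assumes "S \<subseteq> {1..n}" "V \<subseteq> {1..n}" "S \<inter> V = {}" "\<forall>u\<in>S. l \<le> bip_deg F V u"
  shows "card (trees_avoiding n F S) * (n + l) ^ card S \<le> n ^ card S * card (spanning_trees n)"
proof -
  have "finite S"
    using assms(1) by (rule finite_subset) simp
  then show ?thesis
    using assms
  proof (induction S rule: finite_induct)
    case (insert u S)
    have "card (trees_avoiding n F (insert u S)) * (n + l)
        \<le> card (trees_avoiding n F (insert u S)) * (n + bip_deg F V u)"
      using insert.prems(4) by simp
    also have "\<dots> \<le> n * card (trees_avoiding n F S)"
      using insert.hyps(2) insert.prems by (intro card_trees_avoiding_insert) auto
    finally have "card (trees_avoiding n F (insert u S)) * (n + l) ^ card (insert u S)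
        \<le> n * (card (trees_avoiding n F S) * (n + l) ^ card S)"
      using insert.hyps by (simp add: mult_le_mono1 mult.assoc)
    also have "\<dots> \<le> n * (n ^ card S * card (spanning_trees n))"
      using insert.IH insert.prems by simp
    finally show ?case
      using insert.hyps by simp
  qed simp
qed

lemma power_ratio_le_exp:
  fixes x y \<delta> :: real
  assumes "0 \<le> x" "0 \<le> \<delta>" "\<delta> * x \<le> y"
  shows "(x / (x + y)) ^ k \<le> exp (- ln (1 + \<delta>) * k)"
proof -
  have "0 \<le> y"
    using assms by (meson mult_nonneg_nonneg order_trans)
  have "x / (x + y) \<le> 1 / (1 + \<delta>)"
  proof (cases "x = 0")
    case False
    then show ?thesis
      using assms \<open>0 \<le> y\<close> by (simp add: divide_simps algebra_simps)
  qed (simp add: assms)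
  then have "(x / (x + y)) ^ k \<le> (1 / (1 + \<delta>)) ^ k"
    using assms \<open>0 \<le> y\<close> by (intro power_mono) auto
  also have "\<dots> = inverse (exp (real k * ln (1 + \<delta>)))"
    using assms by (simp add: exp_of_nat_mult power_one_over inverse_eq_divide)
  also have "\<dots> = exp (- ln (1 + \<delta>) * k)"
    by (simp add: exp_minus mult.commute)
  finally show ?thesis .
qed

lemma prob_UST_avoids_le:
  assumes "U \<subseteq> {1..n}" "V \<subseteq> {1..n}" "U \<inter> V = {}"
    and "F \<subseteq> {{u, v} | u v. u \<in> U \<and> v \<in> V}" and "\<forall>u\<in>U. l \<le> bip_deg F V u"
  shows "measure_pmf.prob (UST n) {T. F \<inter> T = {}} \<le> (real n / (real n + real l)) ^ card U"
proof (cases "U = {}")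
  case False
  then have "0 < n"
    using assms(1) by auto
  have "spanning_trees n \<inter> {T. F \<inter> T = {}} = trees_avoiding n F U"
    using assms(4) unfolding trees_avoiding_def by blast
  then have "measure_pmf.prob (UST n) {T. F \<inter> T = {}} =
      card (trees_avoiding n F U) / card (spanning_trees n)"
    unfolding UST_def using finite_spanning_trees spanning_trees_nonempty
    by (simp add: measure_pmf_of_set)
  also have "\<dots> \<le> (real n / (real n + real l)) ^ card U"
  proof -
    have "real (card (trees_avoiding n F U) * (n + l) ^ card U) \<le> real (n ^ card U * card (spanning_trees n))"
      unfolding of_nat_le_iff using assms by (intro card_trees_avoiding_le) auto
    then have "real (card (trees_avoiding n F U)) * (real n + real l) ^ card U \<le>
        real n ^ card U * real (card (spanning_trees n))"
      by simp
    then show ?thesis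
      using \<open>0 < n\<close> finite_spanning_trees spanning_trees_nonempty
      by (simp add: divide_simps power_divide card_gt_0_iff mult.commute)
  qed
  finally show ?thesis .
qed (simp add: measure_pmf.prob_le_1)

lemma prob_UST_avoids_le_exp:
  fixes \<epsilon> m :: real
  assumes "0 < \<epsilon>" "\<epsilon> * n \<le> m" "\<epsilon> * m \<le> l"
    and "U \<subseteq> {1..n}" "V \<subseteq> {1..n}" "U \<inter> V = {}"
    and "F \<subseteq> {{u, v} | u v. u \<in> U \<and> v \<in> V}" and "\<forall>u\<in>U. l \<le> bip_deg F V u"
  shows "measure_pmf.prob (UST n) {T. F \<inter> T = {}} \<le> exp (- ln (1 + \<epsilon>\<^sup>2) * card U)"
proof -
  have "\<epsilon> * (\<epsilon> * n) \<le> \<epsilon> * m"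
    using assms(1,2) by (simp add: mult_left_mono)
  then have "\<epsilon>\<^sup>2 * n \<le> l"
    using assms(3) by (simp add: power2_eq_square mult.assoc)
  then have "(real n / (real n + real l)) ^ card U \<le> exp (- ln (1 + \<epsilon>\<^sup>2) * card U)"
    by (intro power_ratio_le_exp) auto
  moreover have "measure_pmf.prob (UST n) {T. F \<inter> T = {}} \<le> (real n / (real n + real l)) ^ card U"
    using assms(4-) by (rule prob_UST_avoids_le)
  ultimately show ?thesis
    by linarith
qed

theorem lemma2p10:
  shows "\<exists>\<epsilon>0 > (0::real). \<forall>\<epsilon>. 0 < \<epsilon> \<and> \<epsilon> < \<epsilon>0 \<longrightarrow>
    (\<exists>c > (0::real). \<forall>(n::nat) (m::nat) (l::nat) (k::nat) (U::nat set) (V::nat set) (F::nat set set).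
       real m \<ge> \<epsilon> * real n \<longrightarrow> \<epsilon> * real m \<le> real l \<longrightarrow> l \<le> m \<longrightarrow> k + m \<le> n \<longrightarrow>
       U \<subseteq> {1..n} \<longrightarrow> V \<subseteq> {1..n} \<longrightarrow> U \<inter> V = {} \<longrightarrow>
       F \<subseteq> {{u, v} | u v. u \<in> U \<and> v \<in> V} \<longrightarrow>
       card U = k \<longrightarrow> card V = m \<longrightarrow>
       (\<forall>u\<in>U. bip_deg F V u \<ge> l) \<longrightarrow>
       measure_pmf.prob (UST n) {T. F \<inter> T = {}} \<le> exp (- c * real k))"
  \<comment> \<open>Every \<epsilon> > 0 works, with c = ln (1 + \<epsilon>^2).\<close>
  apply (rule exI[of _ 1], intro conjI zero_less_one allI impI)
  subgoal for \<epsilon>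
    using prob_UST_avoids_le_exp[of \<epsilon>]
    by (intro exI[of _ "ln (1 + \<epsilon>\<^sup>2)"] conjI allI impI) (auto intro!: ln_gt_zero)
  done

end
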